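(* Let $K>0$ and let $J:V\to V\otimes V$ be any isometric linear isomorphism with $Je_0=e_0\otimes e_0$. There exist $K'>0$ and $\epsilon_0>0$ (independent of $J$) such that for every $0<\epsilon\leq\epsilon_0$ and every 4-tensor $A$ satisfying condition A2 with parameter $\epsilon$ and constant $K$, the tensor $A'$ obtained from $A$ by the type I step satisfies $|A'_{0000}-1|\leq K'\epsilon^4$, and $A'/A'_{0000}$ satisfies condition A3 with parameter $\epsilon$ and constant $K'$.
   Context: $V$ is a real separable infinite-dimensional Hilbert space with orthonormal basis $(e_i)_{i\geq0}$; $V\otimes V$ has orthonormal basis $e_a\otimes e_b$, indexed by pairs $(a,b)$. A 4-tensor is an array $A=(A_{ijkl})_{i,j,k,l\geq0}$ of reals with finite Hilbert–Schmidt norm $\|A\|=(\sum A_{ijkl}^2)^{1/2}$; indices belong to the right, top, left, bottom legs. $A_*$ has $(A_* )_{0000}=1$, all other components $0$. An index is nonzero if it is $\geq1$. Condition A1 (parameter $\epsilon$, constant $K$): $A_{0000}=1$ and $\|A-A_*\|\leq K\epsilon$. Condition A2: A1 holds and the tensor formed by components of $A$ with exactly one nonzero index has norm $\leq K\epsilon^2$. Condition A3: $A_{0000}=1$ and $A=A_*+P+Q$ where $\|P\|\leq K\epsilon$, $\|Q\|\leq K\epsilon^2$, and the only possibly nonzero components of $P$ are "corner" components: $P_{ij00}$, $P_{0jk0}$, $P_{00kl}$, $P_{i00l}$ with both displayed indices nonzero (in particular, components of $P$ with exactly one nonzero index vanish). Type I step: with $T_{(i_1i_2),(j_1j_2),(k_1k_2),(l_1l_2)}=\sum_{a,b,c,d\geq0}A_{aj_1k_1c}A_{i_1j_2ad}A_{bck_2l_1}A_{i_2dbl_2}$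 (contraction of four copies of $A$ in a $2\times2$ block), define $A'_{pqrs}=\sum J_{(i_1i_2),p}J_{(j_1j_2),q}J_{(k_1k_2),r}J_{(l_1l_2),s}T_{(i_1i_2),(j_1j_2),(k_1k_2),(l_1l_2)}$, where $J_{(ab),p}=\langle e_a\otimes e_b,Je_p\rangle$. *)

theory Defs
  imports "HOL-Analysis.Analysis"
begin

text \<open>The Hilbert space V is realised as l2(nat) (coordinates w.r.t. the basis e_i);
  V \<otimes> V is realised as l2(nat \<times> nat) with basis e_a \<otimes> e_b = delta at (a,b).\<close>

definition l2 :: "('a \<Rightarrow> real) set" where
  "l2 = {x. (\<lambda>i. (x i)^2) summable_on UNIV}"

definition l2norm :: "('a \<Rightarrow> real) \<Rightarrow> real" where
  "l2norm x = sqrt (\<Sum>\<^sub>\<infinity>i. (x i)^2)"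

definition basisvec :: "'a \<Rightarrow> 'a \<Rightarrow> real" where
  "basisvec i = (\<lambda>j. if j = i then 1 else 0)"

definition iso_J :: "((nat \<Rightarrow> real) \<Rightarrow> (nat \<times> nat \<Rightarrow> real)) \<Rightarrow> bool" where
  "iso_J J \<longleftrightarrow>
     bij_betw J l2 l2 \<and>
     (\<forall>x\<in>l2. \<forall>y\<in>l2. J (\<lambda>i. x i + y i) = (\<lambda>ab. J x ab + J y ab)) \<and>
     (\<forall>x\<in>l2. \<forall>c. J (\<lambda>i. c * x i) = (\<lambda>ab. c * J x ab)) \<and>
     (\<forall>x\<in>l2. l2norm (J x) = l2norm x) \<and>
     J (basisvec 0) = basisvec (0, 0)"

definition Jcoef :: "((nat \<Rightarrow> real) \<Rightarrow> (nat \<times> nat \<Rightarrow> real)) \<Rightarrow> nat \<times> nat \<Rightarrow> nat \<Rightarrow> real" where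
  "Jcoef J ab p = J (basisvec p) ab"

type_synonym tensor4 = "nat \<Rightarrow> nat \<Rightarrow> nat \<Rightarrow> nat \<Rightarrow> real"

definition hs_fin :: "tensor4 \<Rightarrow> bool" where
  "hs_fin A \<longleftrightarrow> (\<lambda>(i, j, k, l). (A i j k l)^2) summable_on UNIV"

definition hs_norm :: "tensor4 \<Rightarrow> real" where
  "hs_norm A = sqrt (\<Sum>\<^sub>\<infinity>(i, j, k, l). (A i j k l)^2)"

definition Astar :: tensor4 where
  "Astar i j k l = (if i = 0 \<and> j = 0 \<and> k = 0 \<and> l = 0 then 1 else 0)"

definition nnz :: "nat \<Rightarrow> nat" where
  "nnz i = (if i \<ge> 1 then 1 else 0)"

definition one_nz_part :: "tensor4 \<Rightarrow> tensor4" where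
  "one_nz_part A i j k l = (if nnz i + nnz j + nnz k + nnz l = 1 then A i j k l else 0)"

definition condA1 :: "real \<Rightarrow> real \<Rightarrow> tensor4 \<Rightarrow> bool" where
  "condA1 K \<epsilon> A \<longleftrightarrow> hs_fin A \<and> A 0 0 0 0 = 1 \<and>
     hs_norm (\<lambda>i j k l. A i j k l - Astar i j k l) \<le> K * \<epsilon>"

definition condA2 :: "real \<Rightarrow> real \<Rightarrow> tensor4 \<Rightarrow> bool" where
  "condA2 K \<epsilon> A \<longleftrightarrow> condA1 K \<epsilon> A \<and> hs_norm (one_nz_part A) \<le> K * \<epsilon>^2"

definition corner :: "nat \<Rightarrow> nat \<Rightarrow> nat \<Rightarrow> nat \<Rightarrow> bool" where
  "corner i j k l \<longleftrightarrow>
     (i \<ge> 1 \<and> j \<ge> 1 \<and> k = 0 \<and> l = 0) \<or>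
     (i = 0 \<and> j \<ge> 1 \<and> k \<ge> 1 \<and> l = 0) \<or>
     (i = 0 \<and> j = 0 \<and> k \<ge> 1 \<and> l \<ge> 1) \<or>
     (i \<ge> 1 \<and> j = 0 \<and> k = 0 \<and> l \<ge> 1)"

definition condA3 :: "real \<Rightarrow> real \<Rightarrow> tensor4 \<Rightarrow> bool" where
  "condA3 K \<epsilon> A \<longleftrightarrow> A 0 0 0 0 = 1 \<and>
     (\<exists>P Q. hs_fin P \<and> hs_fin Q \<and>
        (\<forall>i j k l. A i j k l = Astar i j k l + P i j k l + Q i j k l) \<and>
        hs_norm P \<le> K * \<epsilon> \<and> hs_norm Q \<le> K * \<epsilon>^2 \<and>
        (\<forall>i j k l. \<not> corner i j k l \<longrightarrow> P i j k l = 0))"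

definition blockT :: "tensor4 \<Rightarrow> nat \<times> nat \<Rightarrow> nat \<times> nat \<Rightarrow> nat \<times> nat \<Rightarrow> nat \<times> nat \<Rightarrow> real" where
  "blockT A = (\<lambda>(i1, i2) (j1, j2) (k1, k2) (l1, l2).
     \<Sum>\<^sub>\<infinity>(a, b, c, d). A a j1 k1 c * A i1 j2 a d * A b c k2 l1 * A i2 d b l2)"

definition typeI :: "((nat \<Rightarrow> real) \<Rightarrow> (nat \<times> nat \<Rightarrow> real)) \<Rightarrow> tensor4 \<Rightarrow> tensor4" where
  "typeI J A p q r s =
     (\<Sum>\<^sub>\<infinity>(x, y, z, w). Jcoef J x p * Jcoef J y q * Jcoef J z r * Jcoef J w s * blockT A x y z w)"

end

theory Submission
  imports Defs
begin

text \<open>Write \<open>A = A\<^sub>* + B\<^sub>1 + B\<^sub>2\<close>, where \<open>B\<^sub>1\<close> collects the components of \<open>A\<close> with exactly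
  one nonzero index and \<open>B\<^sub>2\<close> those with at least two; under A2 their Hilbert--Schmidt norms
  are \<open>O(\<epsilon>\<^sup>2)\<close> and \<open>O(\<epsilon>)\<close>. The type I step is multilinear in its four copies of \<open>A\<close>, so
  \<open>A'\<close> splits into 81 terms, and each term has norm at most the product of the four norms:
  the plaquette contraction is bounded by Cauchy--Schwarz, and the change of basis by \<open>J\<close> by
  Bessel's inequality, since the columns of \<open>J\<close> are orthonormal.

  Because \<open>J e\<^sub>0 = e\<^sub>0 \<otimes> e\<^sub>0\<close>, the component \<open>A'\<^sub>0\<^sub>0\<^sub>0\<^sub>0\<close> only sees the plaquette with all
  external legs zero. Every internal bond joins two tensors, so a nonzero bond puts two of them
  into \<open>B\<^sub>1\<close> or \<open>B\<^sub>2\<close>, and every term other than \<open>A\<^sub>*\<^sup>4\<close> contributes \<open>O(\<epsilon>\<^sup>4)\<close> there. The terms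
  of order \<open>\<epsilon>\<close> contain one \<open>B\<^sub>2\<close> and three copies of \<open>A\<^sub>*\<close>; the latter pin the bonds to zero,
  which leaves a corner component. All remaining terms are \<open>O(\<epsilon>\<^sup>2)\<close>.\<close>

type_synonym J_map = "(nat \<Rightarrow> real) \<Rightarrow> (nat \<times> nat \<Rightarrow> real)"

type_synonym block_index = "(nat \<times> nat) \<times> (nat \<times> nat) \<times> (nat \<times> nat) \<times> (nat \<times> nat)"

section \<open>Square-summable functions\<close>

definition l2_inner :: "('a \<Rightarrow> real) \<Rightarrow> ('a \<Rightarrow> real) \<Rightarrow> real" where
  "l2_inner x y = (\<Sum>\<^sub>\<infinity>i. x i * y i)"

lemma l2_iff: "x \<in> l2 \<longleftrightarrow> (\<lambda>i. (x i)^2) summable_on UNIV"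
  by (simp add: l2_def)

lemma l2norm_nonneg: "0 \<le> l2norm x"
  by (simp add: l2norm_def infsum_nonneg)

lemma l2norm_square: "(l2norm x)^2 = (\<Sum>\<^sub>\<infinity>i. (x i)^2)"
  by (simp add: l2norm_def infsum_nonneg)

lemma l2_inner_self: "l2_inner x x = (l2norm x)^2"
  using l2norm_square[of x] by (simp add: l2_inner_def power2_eq_square)

lemma l2_inner_commute: "l2_inner x y = l2_inner y x"
  by (simp add: l2_inner_def mult.commute)

lemma L2_set_le_l2norm:
  assumes "x \<in> l2"
  shows "L2_set x F \<le> l2norm x"
proof (cases "finite F")
  case True
  then have "(\<Sum>i\<in>F. (x i)^2) \<le> (\<Sum>\<^sub>\<infinity>i. (x i)^2)"
    using assms by (intro finite_sum_le_infsum) (auto simp: l2_iff)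
  then show ?thesis
    unfolding L2_set_def l2norm_def by (rule real_sqrt_le_mono)
qed (simp add: l2norm_nonneg)

lemma l2_finite_bound:
  assumes bound: "\<And>F. finite F \<Longrightarrow> L2_set x F \<le> C"
  shows "x \<in> l2" and "l2norm x \<le> C"
proof -
  have C: "0 \<le> C"
    using bound[of "{}"] by simp
  have sq: "(\<Sum>i\<in>F. (x i)^2) \<le> C^2" if "finite F" for F
  proof -
    have "(\<Sum>i\<in>F. (x i)^2) = (L2_set x F)^2"
      by (simp add: L2_set_def sum_nonneg)
    also have "\<dots> \<le> C^2"
      using bound[OF that] by (intro power_mono) auto
    finally show ?thesis .
  qed
  have summable: "(\<lambda>i. (x i)^2) summable_on UNIV"
    by (rule nonneg_bdd_above_summable_on) (auto intro!: bdd_aboveI2 sq)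
  then show "x \<in> l2"
    by (simp add: l2_iff)
  have "(\<Sum>\<^sub>\<infinity>i. (x i)^2) \<le> C^2"
    by (rule infsum_le_finite_sums[OF summable]) (use sq in auto)
  then have "l2norm x \<le> sqrt (C^2)"
    unfolding l2norm_def by (rule real_sqrt_le_mono)
  then show "l2norm x \<le> C"
    using C by simp
qed

lemma abs_le_l2norm:
  assumes "x \<in> l2"
  shows "\<bar>x i\<bar> \<le> l2norm x"
  using L2_set_le_l2norm[OF assms, of "{i}"] by simp

lemma l2_add:
  assumes "x \<in> l2" "y \<in> l2"
  shows "(\<lambda>i. x i + y i) \<in> l2" and "l2norm (\<lambda>i. x i + y i) \<le> l2norm x + l2norm y"
proof -
  have "L2_set (\<lambda>i. x i + y i) F \<le> l2norm x + l2norm y" for F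
    using L2_set_triangle_ineq[of x y F] L2_set_le_l2norm[OF assms(1), of F]
      L2_set_le_l2norm[OF assms(2), of F]
    by linarith
  then show "(\<lambda>i. x i + y i) \<in> l2" and "l2norm (\<lambda>i. x i + y i) \<le> l2norm x + l2norm y"
    using l2_finite_bound by blast+
qed

lemma l2_scale:
  assumes "x \<in> l2"
  shows "(\<lambda>i. c * x i) \<in> l2" and "l2norm (\<lambda>i. c * x i) = \<bar>c\<bar> * l2norm x"
proof -
  have x: "(\<lambda>i. (x i)^2) summable_on UNIV"
    using assms by (simp add: l2_iff)
  show "(\<lambda>i. c * x i) \<in> l2"
    unfolding l2_iff power_mult_distrib by (rule summable_on_cmult_right[OF x])
  show "l2norm (\<lambda>i. c * x i) = \<bar>c\<bar> * l2norm x"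
    unfolding l2norm_def power_mult_distrib infsum_cmult_right[OF x] by (simp add: real_sqrt_mult)
qed

lemma l2_mono:
  assumes "y \<in> l2" and le: "\<And>i. \<bar>x i\<bar> \<le> \<bar>y i\<bar>"
  shows "x \<in> l2" and "l2norm x \<le> l2norm y"
proof -
  have "L2_set x F \<le> l2norm y" for F
  proof -
    have "L2_set x F \<le> L2_set y F"
      unfolding L2_set_def using le
      by (intro real_sqrt_le_mono sum_mono) (simp add: abs_le_square_iff)
    then show ?thesis
      using L2_set_le_l2norm[OF assms(1), of F] by linarith
  qed
  then show "x \<in> l2" and "l2norm x \<le> l2norm y"
    using l2_finite_bound by blast+
qed

lemma l2_sum:
  assumes "finite S" "\<And>t. t \<in> S \<Longrightarrow> x t \<in> l2"
  shows "(\<lambda>i. \<Sum>t\<in>S. x t i) \<in> l2 \<and> l2norm (\<lambda>i. \<Sum>t\<in>S. x t i) \<le> (\<Sum>t\<in>S. l2norm (x t))"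
  using assms
proof (induction S rule: finite_induct)
  case empty
  then show ?case
    by (simp add: l2_iff l2norm_def)
next
  case (insert t S)
  then show ?case
    using l2_add[of "x t" "\<lambda>i. \<Sum>t\<in>S. x t i"] by auto
qed

lemma Cauchy_Schwarz_l2:
  assumes "x \<in> l2" "y \<in> l2"
  shows "(\<lambda>i. x i * y i) summable_on UNIV" and "\<bar>l2_inner x y\<bar> \<le> l2norm x * l2norm y"
proof -
  have finite_sums: "(\<Sum>i\<in>F. \<bar>x i * y i\<bar>) \<le> l2norm x * l2norm y" for F
  proof -
    have "(\<Sum>i\<in>F. \<bar>x i * y i\<bar>) = (\<Sum>i\<in>F. \<bar>x i\<bar> * \<bar>y i\<bar>)"
      by (simp add: abs_mult)
    also have "\<dots> \<le> L2_set x F * L2_set y F"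
      by (rule L2_set_mult_ineq)
    also have "\<dots> \<le> l2norm x * l2norm y"
      using assms by (intro mult_mono L2_set_le_l2norm) (auto simp: l2norm_nonneg)
    finally show ?thesis .
  qed
  have "bdd_above (sum (\<lambda>i. \<bar>x i * y i\<bar>) ` {F. F \<subseteq> UNIV \<and> finite F})"
    using finite_sums by (intro bdd_aboveI2) blast
  then have abs: "(\<lambda>i. \<bar>x i * y i\<bar>) summable_on UNIV"
    by (intro nonneg_bdd_above_summable_on) auto
  then show "(\<lambda>i. x i * y i) summable_on UNIV"
    using summable_on_iff_abs_summable_on_real[of "\<lambda>i. x i * y i"] by simp
  have "\<bar>l2_inner x y\<bar> \<le> (\<Sum>\<^sub>\<infinity>i. \<bar>x i * y i\<bar>)"
    unfolding l2_inner_def using norm_infsum_bound[of "\<lambda>i. x i * y i" UNIV] abs by simp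
  also have "\<dots> \<le> l2norm x * l2norm y"
    by (rule infsum_le_finite_sums[OF abs]) (use finite_sums in auto)
  finally show "\<bar>l2_inner x y\<bar> \<le> l2norm x * l2norm y" .
qed

lemma has_sum_finite_sum:
  fixes f :: "'i \<Rightarrow> 'a \<Rightarrow> 'b::topological_comm_monoid_add"
  assumes "finite I" "\<And>i. i \<in> I \<Longrightarrow> (f i has_sum s i) A"
  shows "((\<lambda>x. \<Sum>i\<in>I. f i x) has_sum (\<Sum>i\<in>I. s i)) A"
  using assms by (induction I rule: finite_induct) (auto intro!: has_sum_add)

lemma infsum_nonzeroE:
  assumes "infsum f A \<noteq> 0"
  obtains x where "x \<in> A" "f x \<noteq> 0"
  using assms infsum_0 by metis

lemma sum_product4:
  fixes a b c d :: "'t \<Rightarrow> 'a::comm_semiring_0"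
  shows "sum a S * sum b S * sum c S * sum d S
    = (\<Sum>(t1, t2, t3, t4)\<in>S \<times> S \<times> S \<times> S. a t1 * b t2 * c t3 * d t4)"
proof -
  have "(\<Sum>(t1, t2, t3, t4)\<in>S \<times> S \<times> S \<times> S. a t1 * b t2 * c t3 * d t4)
      = (\<Sum>t1\<in>S. \<Sum>t2\<in>S. \<Sum>t3\<in>S. \<Sum>t4\<in>S. a t1 * (b t2 * (c t3 * d t4)))"
    by (simp add: sum.cartesian_product mult.assoc)
  also have "\<dots> = (\<Sum>t1\<in>S. a t1 * (\<Sum>t2\<in>S. b t2 * (\<Sum>t3\<in>S. c t3 * sum d S)))"
    by (simp add: sum_distrib_left)
  also have "\<dots> = sum a S * (sum b S * (sum c S * sum d S))"
    by (simp add: sum_distrib_right)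
  finally show ?thesis
    by (simp add: mult.assoc)
qed

lemma l2_inner_sum_left:
  assumes "finite F" "\<And>i. i \<in> F \<Longrightarrow> u i \<in> l2" "v \<in> l2"
  shows "l2_inner (\<lambda>x. \<Sum>i\<in>F. a i * u i x) v = (\<Sum>i\<in>F. a i * l2_inner (u i) v)"
proof -
  have "((\<lambda>x. a i * (u i x * v x)) has_sum a i * l2_inner (u i) v) UNIV" if "i \<in> F" for i
    unfolding l2_inner_def
    by (intro has_sum_cmult_right has_sum_infsum Cauchy_Schwarz_l2(1) assms that)
  from has_sum_finite_sum[OF assms(1) this] show ?thesis
    unfolding l2_inner_def by (simp add: infsumI sum_distrib_right mult.assoc)
qed

lemma l2norm_lincomb_square:
  assumes "x \<in> l2" "y \<in> l2"
  shows "(l2norm (\<lambda>i. a * x i + b * y i))^2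
    = a^2 * (l2norm x)^2 + 2 * a * b * l2_inner x y + b^2 * (l2norm y)^2"
proof -
  have xx: "((\<lambda>i. (x i)^2) has_sum (l2norm x)^2) UNIV"
    and yy: "((\<lambda>i. (y i)^2) has_sum (l2norm y)^2) UNIV"
    using assms by (simp_all add: l2norm_square l2_iff)
  have xy: "((\<lambda>i. x i * y i) has_sum l2_inner x y) UNIV"
    unfolding l2_inner_def using Cauchy_Schwarz_l2(1)[OF assms] by simp
  have "((\<lambda>i. a^2 * (x i)^2 + 2 * a * b * (x i * y i) + b^2 * (y i)^2) has_sum
      a^2 * (l2norm x)^2 + 2 * a * b * l2_inner x y + b^2 * (l2norm y)^2) UNIV"
    by (intro has_sum_add has_sum_cmult_right xx yy xy)
  then show ?thesis
    unfolding l2norm_square by (simp add: infsumI power2_eq_square algebra_simps)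
qed

lemma Bessel_inequality:
  fixes \<phi> :: "'i \<Rightarrow> 'a \<Rightarrow> real"
  assumes \<phi>: "\<And>i. \<phi> i \<in> l2"
    and orthonormal: "\<And>i j. l2_inner (\<phi> i) (\<phi> j) = (if i = j then 1 else 0)"
    and X: "X \<in> l2"
  shows "(\<lambda>i. l2_inner (\<phi> i) X) \<in> l2" and "l2norm (\<lambda>i. l2_inner (\<phi> i) X) \<le> l2norm X"
proof -
  define c where "c i = l2_inner (\<phi> i) X" for i
  have "L2_set c F \<le> l2norm X" if F: "finite F" for F
  proof -
    define S where "S x = (\<Sum>i\<in>F. c i * \<phi> i x)" for x
    have S: "S \<in> l2"
      unfolding S_def using l2_sum[OF F, of "\<lambda>i x. c i * \<phi> i x"] l2_scale(1)[OF \<phi>] by blast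
    have inner_S: "l2_inner S Y = (\<Sum>i\<in>F. c i * l2_inner (\<phi> i) Y)" if "Y \<in> l2" for Y
      unfolding S_def using F \<phi> that by (rule l2_inner_sum_left)
    have "l2_inner (\<phi> j) S = c j" if "j \<in> F" for j
      using F that
      by (simp add: l2_inner_commute[of "\<phi> j"] inner_S \<phi> orthonormal if_distrib cong: if_cong)
    then have SS: "(l2norm S)^2 = (\<Sum>i\<in>F. (c i)^2)"
      unfolding l2_inner_self[symmetric] inner_S[OF S] by (simp add: power2_eq_square)
    have SX: "l2_inner X S = (\<Sum>i\<in>F. (c i)^2)"
      by (simp add: l2_inner_commute[of X] inner_S[OF X] c_def power2_eq_square)
    have "0 \<le> (l2norm (\<lambda>x. 1 * X x + (-1) * S x))^2"
      by (rule zero_le_power2)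
    also have "\<dots> = (l2norm X)^2 - (\<Sum>i\<in>F. (c i)^2)"
      using l2norm_lincomb_square[OF X S, of 1 "-1"] SS SX by simp
    finally have "(L2_set c F)^2 \<le> (l2norm X)^2"
      by (simp add: L2_set_def sum_nonneg)
    then show ?thesis
      using l2norm_nonneg power2_le_imp_le by blast
  qed
  then show "(\<lambda>i. l2_inner (\<phi> i) X) \<in> l2" and "l2norm (\<lambda>i. l2_inner (\<phi> i) X) \<le> l2norm X"
    using l2_finite_bound[of c] unfolding c_def by blast+
qed

lemma l2_has_sum:
  assumes "x \<in> l2"
  shows "((\<lambda>i. (x i)^2) has_sum (l2norm x)^2) UNIV"
  using assms by (simp add: l2_iff l2norm_square)

lemma l2_from_has_sum:
  assumes "((\<lambda>i. (x i)^2) has_sum r^2) UNIV" "0 \<le> r"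
  shows "x \<in> l2" and "l2norm x = r"
  using assms by (auto simp: l2_iff l2norm_def infsumI has_sum_imp_summable)

lemma l2_reindex:
  assumes "\<And>i. \<tau> (\<sigma> i) = i" "\<And>j. \<sigma> (\<tau> j) = j"
  shows "(\<lambda>i. x (\<sigma> i)) \<in> l2 \<longleftrightarrow> x \<in> l2" and "l2norm (\<lambda>i. x (\<sigma> i)) = l2norm x"
proof -
  have "bij \<sigma>"
    by (rule o_bij[where g = \<tau>]) (auto simp: fun_eq_iff assms)
  then show "(\<lambda>i. x (\<sigma> i)) \<in> l2 \<longleftrightarrow> x \<in> l2" and "l2norm (\<lambda>i. x (\<sigma> i)) = l2norm x"
    using summable_on_reindex_bij_betw[of \<sigma> UNIV UNIV "\<lambda>j. (x j)^2"]
      infsum_reindex_bij_betw[of \<sigma> UNIV UNIV "\<lambda>j. (x j)^2"]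
    by (simp_all add: l2_iff l2norm_def)
qed

lemma has_sum_product:
  fixes f :: "'a \<Rightarrow> real" and g :: "'b \<Rightarrow> real"
  assumes f: "(f has_sum s) UNIV" and g: "(g has_sum t) UNIV"
  shows "((\<lambda>(x, y). f x * g y) has_sum s * t) UNIV"
proof -
  have abs: "(\<lambda>x. \<bar>h x\<bar>) summable_on UNIV" if "h summable_on UNIV" for h :: "'c \<Rightarrow> real"
    using that summable_on_iff_abs_summable_on_real[of h] by simp
  have "((\<lambda>y. \<bar>f x\<bar> * \<bar>g y\<bar>) has_sum \<bar>f x\<bar> * (\<Sum>\<^sub>\<infinity>y. \<bar>g y\<bar>)) UNIV" for x
    by (intro has_sum_cmult_right has_sum_infsum abs has_sum_imp_summable[OF g])
  moreover have "(\<lambda>x. \<bar>f x\<bar> * (\<Sum>\<^sub>\<infinity>y. \<bar>g y\<bar>)) summable_on UNIV"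
    by (intro summable_on_cmult_left abs has_sum_imp_summable[OF f])
  ultimately have "(\<lambda>(x, y). \<bar>f x\<bar> * \<bar>g y\<bar>) summable_on Sigma UNIV (\<lambda>_. UNIV)"
    by (intro summable_on_SigmaI) auto
  then have "(\<lambda>z. norm ((\<lambda>(x, y). f x * g y) z)) summable_on Sigma UNIV (\<lambda>_. UNIV)"
    by (simp add: case_prod_unfold abs_mult)
  then have summable: "(\<lambda>(x, y). f x * g y) summable_on Sigma UNIV (\<lambda>_. UNIV)"
    by (rule summable_on_iff_abs_summable_on_real[THEN iffD2])
  have "((\<lambda>(x, y). f x * g y) has_sum s * t) (Sigma UNIV (\<lambda>_. UNIV))"
    by (rule has_sum_SigmaI[where g = "\<lambda>x. f x * t", OF _ _ summable])
      (auto intro: has_sum_cmult_right[OF g] has_sum_cmult_left[OF f])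
  then show ?thesis
    by simp
qed

lemma has_sum_product4:
  fixes f1 f2 f3 f4 :: "_ \<Rightarrow> real"
  assumes "(f1 has_sum s1) UNIV" "(f2 has_sum s2) UNIV"
    and "(f3 has_sum s3) UNIV" "(f4 has_sum s4) UNIV"
  shows "((\<lambda>(x, y, z, w). f1 x * f2 y * f3 z * f4 w) has_sum s1 * s2 * s3 * s4) UNIV"
  using has_sum_product[OF assms(1) has_sum_product[OF assms(2) has_sum_product[OF assms(3,4)]]]
  by (simp add: case_prod_unfold mult.assoc)

lemma l2_tensor_product:
  assumes "u \<in> l2" "v \<in> l2"
  shows "(\<lambda>(x, y). u x * v y) \<in> l2" and "l2norm (\<lambda>(x, y). u x * v y) = l2norm u * l2norm v"
  using l2_from_has_sum[of "\<lambda>(x, y). u x * v y" "l2norm u * l2norm v"]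
    has_sum_product[OF l2_has_sum[OF assms(1)] l2_has_sum[OF assms(2)]]
  by (simp_all add: case_prod_unfold power_mult_distrib l2norm_nonneg)

lemma l2_tensor_product4:
  assumes "u1 \<in> l2" "u2 \<in> l2" "u3 \<in> l2" "u4 \<in> l2"
  defines "u \<equiv> \<lambda>(x, y, z, w). u1 x * u2 y * u3 z * u4 w"
  shows "u \<in> l2" and "l2norm u = l2norm u1 * l2norm u2 * l2norm u3 * l2norm u4"
  using l2_from_has_sum[of u "l2norm u1 * l2norm u2 * l2norm u3 * l2norm u4"]
    has_sum_product4[OF l2_has_sum[OF assms(1)] l2_has_sum[OF assms(2)] l2_has_sum[OF assms(3)]
      l2_has_sum[OF assms(4)]]
  by (simp_all add: u_def case_prod_unfold power_mult_distrib l2norm_nonneg)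

definition row_norm :: "('u \<times> 'v \<Rightarrow> real) \<Rightarrow> 'u \<Rightarrow> real" where
  "row_norm f u = l2norm (\<lambda>v. f (u, v))"

lemma l2_rows:
  fixes f :: "'u \<times> 'v \<Rightarrow> real"
  assumes f: "f \<in> l2"
  shows "(\<lambda>v. f (u, v)) \<in> l2" and "row_norm f \<in> l2" and "l2norm (row_norm f) = l2norm f"
proof -
  have sq: "((\<lambda>(u, v). (f (u, v))^2) has_sum (l2norm f)^2) (Sigma UNIV (\<lambda>_. UNIV))"
    using l2_has_sum[OF f] by (simp add: case_prod_unfold)
  have row: "(\<lambda>v. f (u, v)) \<in> l2" for u
    using summable_on_SigmaD1[OF has_sum_imp_summable[OF sq], of u] by (simp add: l2_iff)
  then show "(\<lambda>v. f (u, v)) \<in> l2" .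
  have "((\<lambda>u. (row_norm f u)^2) has_sum (l2norm f)^2) UNIV"
    unfolding row_norm_def by (rule has_sum_SigmaD[OF sq]) (use l2_has_sum[OF row] in auto)
  from l2_from_has_sum[OF this l2norm_nonneg]
  show "row_norm f \<in> l2" and "l2norm (row_norm f) = l2norm f"
    by auto
qed

lemma basisvec_l2: "basisvec i \<in> l2" and l2norm_basisvec: "l2norm (basisvec i) = 1"
proof -
  have "((\<lambda>j. (basisvec i j)^2) has_sum 1^2) UNIV"
    by (rule has_sum_finite_neutralI[where B = "{i}"]) (auto simp: basisvec_def)
  from l2_from_has_sum[OF this]
  show "basisvec i \<in> l2" and "l2norm (basisvec i) = 1"
    by auto
qed

lemma l2_inner_basisvec: "l2_inner x (basisvec i) = x i"
proof -
  have "((\<lambda>j. x j * basisvec i j) has_sum x i) UNIV"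
    by (rule has_sum_finite_neutralI[where B = "{i}"]) (auto simp: basisvec_def)
  then show ?thesis
    by (simp add: l2_inner_def infsumI)
qed

section \<open>Hilbert--Schmidt norm of 4-tensors\<close>

definition flat4 :: "tensor4 \<Rightarrow> nat \<times> nat \<times> nat \<times> nat \<Rightarrow> real" where
  "flat4 X = (\<lambda>(i, j, k, l). X i j k l)"

lemma hs_fin_iff_flat4: "hs_fin X \<longleftrightarrow> flat4 X \<in> l2"
  by (simp add: hs_fin_def l2_iff flat4_def case_prod_unfold)

lemma hs_norm_eq_flat4: "hs_norm X = l2norm (flat4 X)"
  by (simp add: hs_norm_def l2norm_def flat4_def case_prod_unfold)

lemma hs_norm_nonneg: "0 \<le> hs_norm X"
  by (simp add: hs_norm_eq_flat4 l2norm_nonneg)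

lemma abs_le_hs_norm: "hs_fin X \<Longrightarrow> \<bar>X i j k l\<bar> \<le> hs_norm X"
  using abs_le_l2norm[of "flat4 X" "(i, j, k, l)"]
  by (simp add: hs_fin_iff_flat4 hs_norm_eq_flat4 flat4_def)

lemma hs_add:
  assumes "hs_fin X" "hs_fin Y"
  shows "hs_fin (\<lambda>i j k l. X i j k l + Y i j k l)"
    and "hs_norm (\<lambda>i j k l. X i j k l + Y i j k l) \<le> hs_norm X + hs_norm Y"
  using l2_add[of "flat4 X" "flat4 Y"] assms
  by (simp_all add: hs_fin_iff_flat4 hs_norm_eq_flat4 flat4_def case_prod_unfold)

lemma hs_scale:
  assumes "hs_fin X"
  shows "hs_fin (\<lambda>i j k l. c * X i j k l)" and "hs_norm (\<lambda>i j k l. c * X i j k l) = \<bar>c\<bar> * hs_norm X"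
  using l2_scale[of "flat4 X" c] assms
  by (simp_all add: hs_fin_iff_flat4 hs_norm_eq_flat4 flat4_def case_prod_unfold)

lemma hs_mono:
  assumes "hs_fin X" "\<And>i j k l. \<bar>Y i j k l\<bar> \<le> \<bar>X i j k l\<bar>"
  shows "hs_fin Y" and "hs_norm Y \<le> hs_norm X"
  using l2_mono[of "flat4 X" "flat4 Y"] assms
  by (simp_all add: hs_fin_iff_flat4 hs_norm_eq_flat4 flat4_def case_prod_unfold)

lemma hs_sum:
  assumes "finite S" "\<And>t. t \<in> S \<Longrightarrow> hs_fin (X t)"
  shows "hs_fin (\<lambda>i j k l. \<Sum>t\<in>S. X t i j k l)"
    and "hs_norm (\<lambda>i j k l. \<Sum>t\<in>S. X t i j k l) \<le> (\<Sum>t\<in>S. hs_norm (X t))"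
  using l2_sum[of S "\<lambda>t. flat4 (X t)"] assms
  by (simp_all add: hs_fin_iff_flat4 hs_norm_eq_flat4 flat4_def case_prod_unfold)

lemma flat4_Astar: "flat4 Astar = basisvec (0, 0, 0, 0)"
  by (auto simp: fun_eq_iff flat4_def Astar_def basisvec_def)

lemma hs_fin_Astar: "hs_fin Astar" and hs_norm_Astar: "hs_norm Astar = 1"
  by (simp_all add: hs_fin_iff_flat4 hs_norm_eq_flat4 flat4_Astar basisvec_l2 l2norm_basisvec)

lemma hs_reshape:
  assumes "hs_fin X" "\<And>w. \<tau> (\<sigma> w) = w" "\<And>z. \<sigma> (\<tau> z) = z"
  shows "(\<lambda>w. flat4 X (\<sigma> w)) \<in> l2" and "l2norm (\<lambda>w. flat4 X (\<sigma> w)) = hs_norm X"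
  using l2_reindex[of \<tau> \<sigma> "flat4 X", OF assms(2,3)] assms(1)
  by (simp_all add: hs_fin_iff_flat4 hs_norm_eq_flat4)

lemma condA3_of_decomposition:
  assumes X: "\<And>p q r s. X p q r s = Astar p q r s + P p q r s + R p q r s"
    and P: "hs_fin P" "hs_norm P \<le> C * \<epsilon>" and R: "hs_fin R" "hs_norm R \<le> C * \<epsilon>^2"
    and corner: "\<And>p q r s. \<not> corner p q r s \<Longrightarrow> P p q r s = 0"
    and c: "1/2 \<le> X 0 0 0 0" "\<bar>X 0 0 0 0 - 1\<bar> \<le> C * \<epsilon>^2"
  shows "condA3 (4 * C) \<epsilon> (\<lambda>p q r s. X p q r s / X 0 0 0 0)"
proof -
  define c where "c = X 0 0 0 0"
  define P' where "P' = (\<lambda>p q r s. (1 / c) * P p q r s)"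
  define Q' where "Q' = (\<lambda>p q r s. (1 / c) * ((1 - c) * Astar p q r s + R p q r s))"
  have inv_c: "\<bar>1 / c\<bar> \<le> 2"
    using c(1) by (simp add: c_def field_simps)
  have "hs_norm P' \<le> 2 * (C * \<epsilon>)"
    using hs_scale(2)[OF P(1), of "1 / c"] mult_mono[OF inv_c P(2)]
    by (simp add: P'_def hs_norm_nonneg)
  moreover have "0 \<le> C * \<epsilon>"
    using P(2) hs_norm_nonneg order_trans by blast
  ultimately have P': "hs_fin P'" "hs_norm P' \<le> 4 * C * \<epsilon>"
    using hs_scale(1)[OF P(1), of "1 / c"] by (simp_all add: P'_def)
  have Q0: "hs_fin (\<lambda>p q r s. (1 - c) * Astar p q r s + R p q r s)"
    "hs_norm (\<lambda>p q r s. (1 - c) * Astar p q r s + R p q r s) \<le> \<bar>1 - c\<bar> + hs_norm R"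
    using hs_add[OF hs_scale(1)[OF hs_fin_Astar, of "1 - c"] R(1)]
      hs_scale(2)[OF hs_fin_Astar, of "1 - c"]
    by (simp_all add: hs_norm_Astar)
  have "hs_norm (\<lambda>p q r s. (1 - c) * Astar p q r s + R p q r s) \<le> 2 * C * \<epsilon>^2"
    using Q0(2) c(2) R(2) by (simp add: c_def abs_minus_commute)
  from mult_mono[OF inv_c this]
  have Q': "hs_fin Q'" "hs_norm Q' \<le> 4 * C * \<epsilon>^2"
    using hs_scale[OF Q0(1), of "1 / c"] by (simp_all add: Q'_def hs_norm_nonneg)
  have "X p q r s / c = Astar p q r s + P' p q r s + Q' p q r s" for p q r s
    using X[of p q r s] c(1) by (simp add: c_def P'_def Q'_def field_simps)
  moreover have "c / c = 1"
    using c(1) by (simp add: c_def)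
  moreover have "P' p q r s = 0" if "\<not> corner p q r s" for p q r s
    using corner[OF that] by (simp add: P'_def)
  ultimately show ?thesis
    unfolding condA3_def c_def using P' Q' by blast
qed

section \<open>The plaquette contraction\<close>

text \<open>The four tensors sit on a square whose sides are the internal bonds. Opposite corners share
  no bond, so each diagonal pair is a tensor product of two rows, and Cauchy--Schwarz applies
  to the two diagonals.\<close>

lemma plaquette_bound:
  fixes f1 f2 f3 f4 :: "('i \<times> 'i) \<times> ('i \<times> 'i) \<Rightarrow> real" and i1 i2 j1 j2 k1 k2 m1 m2 :: 'i
  assumes fs: "f1 \<in> l2" "f2 \<in> l2" "f3 \<in> l2" "f4 \<in> l2"
  defines "h \<equiv> \<lambda>(a, b, c, d). f1 ((j1, k1), (a, c)) * f2 ((i1, j2), (a, d)) * f3 ((k2, m1), (b, c))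
    * f4 ((i2, m2), (d, b))"
  shows "h summable_on UNIV"
    and "\<bar>\<Sum>\<^sub>\<infinity>e. h e\<bar>
      \<le> row_norm f1 (j1, k1) * row_norm f2 (i1, j2) * row_norm f3 (k2, m1) * row_norm f4 (i2, m2)"
proof -
  define F where "F = (\<lambda>(a, b, c, d). f1 ((j1, k1), (a, c)) * f4 ((i2, m2), (d, b)))"
  define G where "G = (\<lambda>(a, b, c, d). f2 ((i1, j2), (a, d)) * f3 ((k2, m1), (b, c)))"
  have rows: "(\<lambda>v. f1 ((j1, k1), v)) \<in> l2" "(\<lambda>v. f2 ((i1, j2), v)) \<in> l2"
    "(\<lambda>v. f3 ((k2, m1), v)) \<in> l2" "(\<lambda>v. f4 ((i2, m2), v)) \<in> l2"
    by (rule l2_rows(1), rule fs)+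
  note FF = l2_tensor_product[OF rows(1) rows(4)]
  note GG = l2_tensor_product[OF rows(2) rows(3)]
  have F: "F \<in> l2" "l2norm F = row_norm f1 (j1, k1) * row_norm f4 (i2, m2)"
    using FF l2_reindex[of "\<lambda>((a, c), (d, b)). (a, b, c, d)" "\<lambda>(a, b, c, d). ((a, c), (d, b))"
        "\<lambda>(p, q). f1 ((j1, k1), p) * f4 ((i2, m2), q)"]
    by (auto simp: F_def row_norm_def case_prod_unfold)
  have G: "G \<in> l2" "l2norm G = row_norm f2 (i1, j2) * row_norm f3 (k2, m1)"
    using GG l2_reindex[of "\<lambda>((a, d), (b, c)). (a, b, c, d)" "\<lambda>(a, b, c, d). ((a, d), (b, c))"
        "\<lambda>(p, q). f2 ((i1, j2), p) * f3 ((k2, m1), q)"]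
    by (auto simp: G_def row_norm_def case_prod_unfold)
  have h: "h = (\<lambda>e. F e * G e)"
    by (auto simp: fun_eq_iff h_def F_def G_def)
  show "h summable_on UNIV"
    unfolding h by (rule Cauchy_Schwarz_l2(1)[OF F(1) G(1)])
  show "\<bar>\<Sum>\<^sub>\<infinity>e. h e\<bar>
      \<le> row_norm f1 (j1, k1) * row_norm f2 (i1, j2) * row_norm f3 (k2, m1) * row_norm f4 (i2, m2)"
    using Cauchy_Schwarz_l2(2)[OF F(1) G(1)] unfolding h l2_inner_def F(2) G(2)
    by (simp add: ac_simps)
qed

lemma plaquette_l2:
  fixes f1 f2 f3 f4 :: "('i \<times> 'i) \<times> ('i \<times> 'i) \<Rightarrow> real"
  assumes fs: "f1 \<in> l2" "f2 \<in> l2" "f3 \<in> l2" "f4 \<in> l2"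
  defines "T \<equiv> \<lambda>((i1, i2), (j1, j2), (k1, k2), (m1, m2)). \<Sum>\<^sub>\<infinity>(a, b, c, d).
    f1 ((j1, k1), (a, c)) * f2 ((i1, j2), (a, d)) * f3 ((k2, m1), (b, c)) * f4 ((i2, m2), (d, b))"
  shows "T \<in> l2" and "l2norm T \<le> l2norm f1 * l2norm f2 * l2norm f3 * l2norm f4"
proof -
  define B where
    "B = (\<lambda>(x, y, z, w). row_norm f1 x * row_norm f2 y * row_norm f3 z * row_norm f4 w)"
  have B: "B \<in> l2" "l2norm B = l2norm f1 * l2norm f2 * l2norm f3 * l2norm f4"
    using l2_tensor_product4[OF l2_rows(2)[OF fs(1)] l2_rows(2)[OF fs(2)] l2_rows(2)[OF fs(3)]
        l2_rows(2)[OF fs(4)]]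
    by (simp_all add: B_def l2_rows(3) fs)
  define \<sigma> :: "('i \<times> 'i) \<times> ('i \<times> 'i) \<times> ('i \<times> 'i) \<times> ('i \<times> 'i) \<Rightarrow> _" where
    "\<sigma> = (\<lambda>((i1, i2), (j1, j2), (k1, k2), (m1, m2)). ((j1, k1), (i1, j2), (k2, m1), (i2, m2)))"
  have B\<sigma>: "(\<lambda>e. B (\<sigma> e)) \<in> l2" "l2norm (\<lambda>e. B (\<sigma> e)) = l2norm B"
    using B(1) l2_reindex[of
        "\<lambda>((j1, k1), (i1, j2), (k2, m1), (i2, m2)). ((i1, i2), (j1, j2), (k1, k2), (m1, m2))" \<sigma> B]
    by (auto simp: \<sigma>_def)
  have "\<bar>T e\<bar> \<le> \<bar>B (\<sigma> e)\<bar>" for e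
    using plaquette_bound(2)[OF fs]
    by (auto simp: T_def B_def \<sigma>_def case_prod_unfold row_norm_def l2norm_nonneg)
  from l2_mono[OF B\<sigma>(1) this]
  show "T \<in> l2" and "l2norm T \<le> l2norm f1 * l2norm f2 * l2norm f3 * l2norm f4"
    using B\<sigma>(2) B(2) by auto
qed

definition blockT4 :: "tensor4 \<Rightarrow> tensor4 \<Rightarrow> tensor4 \<Rightarrow> tensor4 \<Rightarrow> block_index \<Rightarrow> real" where
  "blockT4 X1 X2 X3 X4 = (\<lambda>((i1, i2), (j1, j2), (k1, k2), (m1, m2)).
     \<Sum>\<^sub>\<infinity>(a, b, c, d). X1 a j1 k1 c * X2 i1 j2 a d * X3 b c k2 m1 * X4 i2 d b m2)"

lemma blockT_eq_blockT4: "blockT A x y z w = blockT4 A A A A (x, y, z, w)"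
  by (simp add: blockT_def blockT4_def case_prod_unfold)

lemma blockT4_l2:
  assumes hs: "hs_fin X1" "hs_fin X2" "hs_fin X3" "hs_fin X4"
  shows "(\<lambda>(a, b, c, d). X1 a j1 k1 c * X2 i1 j2 a d * X3 b c k2 m1 * X4 i2 d b m2)
      summable_on UNIV"
    and "blockT4 X1 X2 X3 X4 \<in> l2"
    and "l2norm (blockT4 X1 X2 X3 X4) \<le> hs_norm X1 * hs_norm X2 * hs_norm X3 * hs_norm X4"
proof -
  define f1 where "f1 = (\<lambda>((j, k), (a, c)). X1 a j k c)"
  define f2 where "f2 = (\<lambda>((i, j), (a, d)). X2 i j a d)"
  define f3 where "f3 = (\<lambda>((k, l), (b, c)). X3 b c k l)"
  define f4 where "f4 = (\<lambda>((i, l), (d, b)). X4 i d b l)"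
  have f1: "f1 \<in> l2" "l2norm f1 = hs_norm X1"
    using hs_reshape[OF hs(1),
        of "\<lambda>(a, j, k, c). ((j, k), (a, c))" "\<lambda>((j, k), (a, c)). (a, j, k, c)"]
    by (auto simp: f1_def flat4_def case_prod_unfold)
  have f2: "f2 \<in> l2" "l2norm f2 = hs_norm X2"
    using hs_reshape[OF hs(2),
        of "\<lambda>(i, j, a, d). ((i, j), (a, d))" "\<lambda>((i, j), (a, d)). (i, j, a, d)"]
    by (auto simp: f2_def flat4_def case_prod_unfold)
  have f3: "f3 \<in> l2" "l2norm f3 = hs_norm X3"
    using hs_reshape[OF hs(3),
        of "\<lambda>(b, c, k, l). ((k, l), (b, c))" "\<lambda>((k, l), (b, c)). (b, c, k, l)"]
    by (auto simp: f3_def flat4_def case_prod_unfold)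
  have f4: "f4 \<in> l2" "l2norm f4 = hs_norm X4"
    using hs_reshape[OF hs(4),
        of "\<lambda>(i, d, b, l). ((i, l), (d, b))" "\<lambda>((i, l), (d, b)). (i, d, b, l)"]
    by (auto simp: f4_def flat4_def case_prod_unfold)
  show "(\<lambda>(a, b, c, d). X1 a j1 k1 c * X2 i1 j2 a d * X3 b c k2 m1 * X4 i2 d b m2)
      summable_on UNIV"
    using plaquette_bound(1)[OF f1(1) f2(1) f3(1) f4(1), of j1 k1 i1 j2 k2 m1 i2 m2]
    by (simp add: f1_def f2_def f3_def f4_def)
  have "blockT4 X1 X2 X3 X4 = (\<lambda>((i1, i2), (j1, j2), (k1, k2), (m1, m2)).
      \<Sum>\<^sub>\<infinity>(a, b, c, d). f1 ((j1, k1), (a, c)) * f2 ((i1, j2), (a, d)) * f3 ((k2, m1), (b, c))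
        * f4 ((i2, m2), (d, b)))"
    by (simp add: blockT4_def f1_def f2_def f3_def f4_def)
  with plaquette_l2[OF f1(1) f2(1) f3(1) f4(1)]
  show "blockT4 X1 X2 X3 X4 \<in> l2"
    and "l2norm (blockT4 X1 X2 X3 X4) \<le> hs_norm X1 * hs_norm X2 * hs_norm X3 * hs_norm X4"
    by (simp_all add: f1 f2 f3 f4)
qed

section \<open>The isometry \<open>J\<close>\<close>

lemma iso_J_l2: "iso_J J \<Longrightarrow> x \<in> l2 \<Longrightarrow> J x \<in> l2"
  unfolding iso_J_def using bij_betwE by blast

lemma iso_J_column_l2: "iso_J J \<Longrightarrow> J (basisvec p) \<in> l2"
  by (simp add: iso_J_l2 basisvec_l2)

lemma iso_J_inner:
  assumes J: "iso_J J" and x: "x \<in> l2" and y: "y \<in> l2"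
  shows "l2_inner (J x) (J y) = l2_inner x y"
proof -
  have Jx: "J x \<in> l2" and Jy: "J y \<in> l2" and xy: "(\<lambda>i. x i + y i) \<in> l2"
    using iso_J_l2[OF J] x y l2_add(1)[OF x y] by auto
  have "J (\<lambda>i. x i + y i) = (\<lambda>i. J x i + J y i)"
    using J x y by (simp add: iso_J_def)
  moreover have "l2norm (J (\<lambda>i. x i + y i)) = l2norm (\<lambda>i. x i + y i)"
    using J xy by (simp add: iso_J_def)
  ultimately have "l2norm (\<lambda>i. J x i + J y i) = l2norm (\<lambda>i. x i + y i)"
    by simp
  moreover have "l2norm (J x) = l2norm x" "l2norm (J y) = l2norm y"
    using J x y by (simp_all add: iso_J_def)
  ultimately show ?thesis
    using l2norm_lincomb_square[OF Jx Jy, of 1 1] l2norm_lincomb_square[OF x y, of 1 1] by simp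
qed

lemma iso_J_columns_orthonormal:
  "iso_J J \<Longrightarrow> l2_inner (J (basisvec p)) (J (basisvec q)) = (if p = q then 1 else 0)"
  by (simp add: iso_J_inner basisvec_l2 l2_inner_basisvec) (simp add: basisvec_def)

lemma iso_J_column_origin:
  assumes "iso_J J"
  shows "J (basisvec p) (0, 0) = (if p = 0 then 1 else 0)"
proof -
  have "J (basisvec 0) = basisvec (0, 0)"
    using assms by (simp add: iso_J_def)
  then show ?thesis
    using iso_J_columns_orthonormal[OF assms, of p 0] by (simp add: l2_inner_basisvec)
qed

lemma Jcoef_nonzero:
  assumes "iso_J J" "Jcoef J (u, v) p \<noteq> 0"
  shows "p = 0 \<longleftrightarrow> u = 0 \<and> v = 0"
proof
  assume "p = 0"
  then show "u = 0 \<and> v = 0"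
    using assms by (auto simp: Jcoef_def iso_J_def basisvec_def split: if_splits)
next
  assume "u = 0 \<and> v = 0"
  then show "p = 0"
    using assms iso_J_column_origin[OF assms(1), of p] by (auto simp: Jcoef_def split: if_splits)
qed

definition column_tensor :: "J_map \<Rightarrow> nat \<times> nat \<times> nat \<times> nat \<Rightarrow> block_index \<Rightarrow> real" where
  "column_tensor J =
     (\<lambda>(p, q, r, s) (x, y, z, w). Jcoef J x p * Jcoef J y q * Jcoef J z r * Jcoef J w s)"

lemma column_tensor_l2: "iso_J J \<Longrightarrow> column_tensor J i \<in> l2"
  using l2_tensor_product4(1)[OF iso_J_column_l2 iso_J_column_l2 iso_J_column_l2 iso_J_column_l2]
  by (auto simp: column_tensor_def Jcoef_def case_prod_unfold)

lemma column_tensor_orthonormal: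
  assumes "iso_J J"
  shows "l2_inner (column_tensor J i) (column_tensor J i') = (if i = i' then 1 else 0)"
proof -
  obtain p q r s p' q' r' s' where i: "i = (p, q, r, s)" and i': "i' = (p', q', r', s')"
    by (cases i, cases i') auto
  have col: "((\<lambda>x. Jcoef J x u * Jcoef J x u') has_sum (if u = u' then 1 else 0)) UNIV" for u u'
  proof -
    have "((\<lambda>x. J (basisvec u) x * J (basisvec u') x)
        has_sum l2_inner (J (basisvec u)) (J (basisvec u'))) UNIV"
      unfolding l2_inner_def by (intro has_sum_infsum Cauchy_Schwarz_l2(1) iso_J_column_l2 assms)
    then show ?thesis
      by (simp add: Jcoef_def iso_J_columns_orthonormal[OF assms])
  qed
  show ?thesis
    using has_sum_product4[OF col col col col, of p p' q q' r r' s s']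
    by (auto simp: l2_inner_def i i' column_tensor_def case_prod_unfold ac_simps dest: infsumI)
qed

section \<open>The type I step as a multilinear map\<close>

definition typeI4 :: "J_map \<Rightarrow> tensor4 \<Rightarrow> tensor4 \<Rightarrow> tensor4 \<Rightarrow> tensor4 \<Rightarrow> tensor4" where
  "typeI4 J X1 X2 X3 X4 p q r s = (\<Sum>\<^sub>\<infinity>(x, y, z, w).
     Jcoef J x p * Jcoef J y q * Jcoef J z r * Jcoef J w s * blockT4 X1 X2 X3 X4 (x, y, z, w))"

lemma typeI_eq_typeI4: "typeI J A = typeI4 J A A A A"
  by (simp add: fun_eq_iff typeI_def typeI4_def blockT_eq_blockT4)

lemma typeI4_eq_inner:
  "typeI4 J X1 X2 X3 X4 p q r s = l2_inner (column_tensor J (p, q, r, s)) (blockT4 X1 X2 X3 X4)"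
  by (simp add: typeI4_def l2_inner_def column_tensor_def case_prod_unfold)

lemma typeI4_hs:
  assumes "iso_J J" "hs_fin X1" "hs_fin X2" "hs_fin X3" "hs_fin X4"
  shows "hs_fin (typeI4 J X1 X2 X3 X4)"
    and "hs_norm (typeI4 J X1 X2 X3 X4) \<le> hs_norm X1 * hs_norm X2 * hs_norm X3 * hs_norm X4"
proof -
  have flat:
    "flat4 (typeI4 J X1 X2 X3 X4) = (\<lambda>i. l2_inner (column_tensor J i) (blockT4 X1 X2 X3 X4))"
    by (auto simp: fun_eq_iff flat4_def typeI4_eq_inner)
  note Bessel = Bessel_inequality[OF column_tensor_l2[OF assms(1)]
      column_tensor_orthonormal[OF assms(1)] blockT4_l2(2)[OF assms(2-5)]]
  show "hs_fin (typeI4 J X1 X2 X3 X4)"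
    unfolding hs_fin_iff_flat4 flat by (rule Bessel(1))
  show "hs_norm (typeI4 J X1 X2 X3 X4) \<le> hs_norm X1 * hs_norm X2 * hs_norm X3 * hs_norm X4"
    unfolding hs_norm_eq_flat4[of "typeI4 J X1 X2 X3 X4"] flat
    using Bessel(2) blockT4_l2(3)[OF assms(2-5)] by linarith
qed

lemma typeI4_sum:
  assumes J: "iso_J J" and S: "finite S" and Y: "\<And>t. t \<in> S \<Longrightarrow> hs_fin (Y t)"
  defines "Z \<equiv> \<lambda>i j k l. \<Sum>t\<in>S. Y t i j k l"
  shows "typeI4 J Z Z Z Z p q r s
    = (\<Sum>(t1, t2, t3, t4)\<in>S \<times> S \<times> S \<times> S. typeI4 J (Y t1) (Y t2) (Y t3) (Y t4) p q r s)"
proof -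
  let ?B = "\<lambda>(t1, t2, t3, t4). blockT4 (Y t1) (Y t2) (Y t3) (Y t4)"
  have SSSS: "finite (S \<times> S \<times> S \<times> S)"
    using S by simp
  have Yt: "hs_fin (Y t1)" "hs_fin (Y t2)" "hs_fin (Y t3)" "hs_fin (Y t4)"
    if "(t1, t2, t3, t4) \<in> S \<times> S \<times> S \<times> S" for t1 t2 t3 t4
    using that Y by auto
  have block: "blockT4 Z Z Z Z = (\<lambda>e. \<Sum>t\<in>S \<times> S \<times> S \<times> S. ?B t e)"
  proof
    fix e :: block_index
    obtain i1 i2 j1 j2 k1 k2 m1 m2 where e: "e = ((i1, i2), (j1, j2), (k1, k2), (m1, m2))"
      by (metis prod.exhaust)
    let ?h = "\<lambda>(t1, t2, t3, t4) (a, b, c, d).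
      Y t1 a j1 k1 c * Y t2 i1 j2 a d * Y t3 b c k2 m1 * Y t4 i2 d b m2"
    have "(?h t has_sum ?B t e) UNIV" if "t \<in> S \<times> S \<times> S \<times> S" for t
      using that blockT4_l2(1)[OF Yt] by (auto simp: e blockT4_def intro!: has_sum_infsum)
    from has_sum_finite_sum[OF SSSS this]
    show "blockT4 Z Z Z Z e = (\<Sum>t\<in>S \<times> S \<times> S \<times> S. ?B t e)"
      by (simp add: e blockT4_def Z_def sum_product4 case_prod_unfold infsumI)
  qed
  have "?B t \<in> l2" if "t \<in> S \<times> S \<times> S \<times> S" for t
    using that by (cases t) (auto intro!: blockT4_l2(2) Y)
  from l2_inner_sum_left[OF SSSS this column_tensor_l2[OF J], where a = "\<lambda>_. 1"]
  show ?thesis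
    by (simp add: typeI4_eq_inner block l2_inner_commute case_prod_unfold)
qed

lemma typeI4_nonzero:
  assumes "typeI4 J X1 X2 X3 X4 p q r s \<noteq> 0"
  obtains i1 i2 j1 j2 k1 k2 m1 m2 a b c d where
    "Jcoef J (i1, i2) p \<noteq> 0" "Jcoef J (j1, j2) q \<noteq> 0"
    "Jcoef J (k1, k2) r \<noteq> 0" "Jcoef J (m1, m2) s \<noteq> 0"
    "X1 a j1 k1 c \<noteq> 0" "X2 i1 j2 a d \<noteq> 0" "X3 b c k2 m1 \<noteq> 0" "X4 i2 d b m2 \<noteq> 0"
proof -
  obtain e where "(\<lambda>(x, y, z, w). Jcoef J x p * Jcoef J y q * Jcoef J z r * Jcoef J w s
      * blockT4 X1 X2 X3 X4 (x, y, z, w)) e \<noteq> 0"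
    using assms unfolding typeI4_def by (rule infsum_nonzeroE)
  moreover obtain i1 i2 j1 j2 k1 k2 m1 m2 where e: "e = ((i1, i2), (j1, j2), (k1, k2), (m1, m2))"
    by (metis prod.exhaust)
  ultimately have J: "Jcoef J (i1, i2) p \<noteq> 0" "Jcoef J (j1, j2) q \<noteq> 0" "Jcoef J (k1, k2) r \<noteq> 0"
      "Jcoef J (m1, m2) s \<noteq> 0"
    and "blockT4 X1 X2 X3 X4 ((i1, i2), (j1, j2), (k1, k2), (m1, m2)) \<noteq> 0"
    by auto
  then obtain v
    where "(\<lambda>(a, b, c, d). X1 a j1 k1 c * X2 i1 j2 a d * X3 b c k2 m1 * X4 i2 d b m2) v \<noteq> 0"
    by (auto simp: blockT4_def elim: infsum_nonzeroE)
  moreover obtain a b c d where "v = (a, b, c, d)"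
    by (metis prod.exhaust)
  ultimately have "X1 a j1 k1 c \<noteq> 0" "X2 i1 j2 a d \<noteq> 0" "X3 b c k2 m1 \<noteq> 0" "X4 i2 d b m2 \<noteq> 0"
    by auto
  with J show ?thesis
    by (rule that)
qed

section \<open>Grading of \<open>A\<close> by the number of nonzero indices\<close>

definition grade :: "nat \<Rightarrow> nat \<Rightarrow> nat \<Rightarrow> nat \<Rightarrow> nat" where
  "grade i j k l = min 2 (nnz i + nnz j + nnz k + nnz l)"

definition graded_part :: "tensor4 \<Rightarrow> nat \<Rightarrow> tensor4" where
  "graded_part A g i j k l = (if grade i j k l = g then A i j k l else 0)"

text \<open>Under A2 the part of grade \<open>g\<close> has norm \<open>O(\<epsilon> ^ grade_order g)\<close>: a single nonzero index
  costs \<open>\<epsilon>\<^sup>2\<close>, two or more only \<open>\<epsilon>\<close>.\<close>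

definition grade_order :: "nat \<Rightarrow> nat" where
  "grade_order g = (if g = 0 then 0 else if g = 1 then 2 else 1)"

lemma grade_le_2: "grade i j k l \<le> 2"
  by (simp add: grade_def)

lemma grade_eq_0_iff: "grade i j k l = 0 \<longleftrightarrow> i = 0 \<and> j = 0 \<and> k = 0 \<and> l = 0"
  by (auto simp: grade_def nnz_def)

lemma sum_graded_parts: "(\<Sum>g\<le>2. graded_part A g i j k l) = A i j k l"
  using grade_le_2[of i j k l]
  by (auto simp: graded_part_def numeral_2_eq_2 atMost_Suc le_Suc_eq)

lemma graded_part_nonzero: "graded_part A g i j k l \<noteq> 0 \<Longrightarrow> g = grade i j k l"
  by (simp add: graded_part_def split: if_splits)

lemma graded_part_0: "A 0 0 0 0 = 1 \<Longrightarrow> graded_part A 0 = Astar"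
  by (auto simp: fun_eq_iff graded_part_def grade_eq_0_iff Astar_def)

lemma graded_part_1: "graded_part A 1 = one_nz_part A"
  by (auto simp: fun_eq_iff graded_part_def one_nz_part_def grade_def)

lemma graded_part_hs:
  assumes A2: "condA2 K \<epsilon> A" and "0 \<le> K" "0 \<le> \<epsilon>" "g \<le> 2"
  shows "hs_fin (graded_part A g)"
    and "hs_norm (graded_part A g) \<le> (1 + K) * \<epsilon> ^ grade_order g"
proof -
  have A: "hs_fin A" "A 0 0 0 0 = 1"
    "hs_norm (\<lambda>i j k l. A i j k l - Astar i j k l) \<le> K * \<epsilon>" "hs_norm (one_nz_part A) \<le> K * \<epsilon>^2"
    using A2 by (auto simp: condA2_def condA1_def)
  show "hs_fin (graded_part A g)"
    by (rule hs_mono(1)[OF A(1)]) (simp add: graded_part_def)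
  consider "g = 0" | "g = 1" | "g = 2"
    using \<open>g \<le> 2\<close> by linarith
  then show "hs_norm (graded_part A g) \<le> (1 + K) * \<epsilon> ^ grade_order g"
  proof cases
    case 1
    then show ?thesis
      using assms by (simp add: graded_part_0[of A, OF A(2)] hs_norm_Astar grade_order_def)
  next
    case 2
    have "hs_norm (graded_part A 1) \<le> (1 + K) * \<epsilon>^2"
      unfolding graded_part_1 using A(4) mult_right_mono[of K "1 + K" "\<epsilon>^2"] by simp
    then show ?thesis
      using 2 by (simp add: grade_order_def)
  next
    case 3
    have D: "hs_fin (\<lambda>i j k l. A i j k l - Astar i j k l)"
      using hs_add(1)[OF A(1) hs_scale(1)[OF hs_fin_Astar, of "-1"]] by simp
    have "\<bar>graded_part A 2 i j k l\<bar> \<le> \<bar>A i j k l - Astar i j k l\<bar>" for i j k l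
      by (auto simp: graded_part_def Astar_def grade_def nnz_def)
    then have "hs_norm (graded_part A 2) \<le> K * \<epsilon>"
      using hs_mono(2)[OF D] A(3) by (meson order_trans)
    also have "\<dots> \<le> (1 + K) * \<epsilon>"
      using assms by (simp add: mult_right_mono)
    finally show ?thesis
      using 3 by (simp add: grade_order_def)
  qed
qed

text \<open>With all external legs zero, each internal bond joins two tensors, so a nonzero bond lifts
  two of them out of grade 0.\<close>

lemma plaquette_origin_order:
  assumes "\<not> (a = 0 \<and> b = 0 \<and> c = 0 \<and> d = 0)"
  shows "4 \<le> grade_order (grade a 0 0 c) + grade_order (grade 0 0 a d)
    + grade_order (grade b c 0 0) + grade_order (grade 0 d b 0)"
  using assms by (cases "a = 0"; cases "b = 0"; cases "c = 0"; cases "d = 0")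
    (simp_all add: grade_def grade_order_def nnz_def)

lemma grade_order_eq_1_cases:
  assumes "grade_order g1 + grade_order g2 + grade_order g3 + grade_order g4 = 1"
    and "g1 \<le> 2" "g2 \<le> 2" "g3 \<le> 2" "g4 \<le> 2"
  shows "(g1, g2, g3, g4) \<in> {(2, 0, 0, 0), (0, 2, 0, 0), (0, 0, 2, 0), (0, 0, 0, 2)}"
proof -
  have "g \<in> {0, 1, 2}" if "g \<le> 2" for g :: nat
    using that by auto
  then have "g1 \<in> {0, 1, 2}" "g2 \<in> {0, 1, 2}" "g3 \<in> {0, 1, 2}" "g4 \<in> {0, 1, 2}"
    using assms(2-5) by blast+
  then show ?thesis
    using assms(1) by (simp add: grade_order_def) (elim disjE; simp)
qed

lemma plaquette_corner:
  assumes "(grade a j1 k1 c, grade i1 j2 a d, grade b c k2 m1, grade i2 d b m2)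
      \<in> {(2, 0, 0, 0), (0, 2, 0, 0), (0, 0, 2, 0), (0, 0, 0, 2)}"
    and p: "p = 0 \<longleftrightarrow> i1 = 0 \<and> i2 = 0" and q: "q = 0 \<longleftrightarrow> j1 = 0 \<and> j2 = 0"
    and r: "r = 0 \<longleftrightarrow> k1 = 0 \<and> k2 = 0" and s: "s = 0 \<longleftrightarrow> m1 = 0 \<and> m2 = 0"
  shows "corner p q r s"
proof -
  have nnz: "nnz 0 = 0" "nnz x \<le> 1" "nnz x = 1 \<longleftrightarrow> x \<noteq> 0" for x
    by (simp_all add: nnz_def)
  have two_nonzero:
    "grade 0 x y 0 = 2 \<Longrightarrow> x \<noteq> 0 \<and> y \<noteq> 0" "grade x y 0 0 = 2 \<Longrightarrow> x \<noteq> 0 \<and> y \<noteq> 0"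
    "grade 0 0 x y = 2 \<Longrightarrow> x \<noteq> 0 \<and> y \<noteq> 0" "grade x 0 0 y = 2 \<Longrightarrow> x \<noteq> 0 \<and> y \<noteq> 0" for x y
    using nnz(2)[of x] nnz(2)[of y] nnz(3)[of x] nnz(3)[of y]
    by (simp_all add: grade_def nnz(1))
  from assms(1) show ?thesis
  proof (elim insertE emptyE)
    assume "(grade a j1 k1 c, grade i1 j2 a d, grade b c k2 m1, grade i2 d b m2) = (2, 0, 0, 0)"
    then have "i1 = 0" "i2 = 0" "j2 = 0" "k2 = 0" "m1 = 0" "m2 = 0" "j1 \<noteq> 0" "k1 \<noteq> 0"
      using two_nonzero(1)[of j1 k1] by (auto simp: grade_eq_0_iff)
    then show ?thesis
      using p q r s by (simp add: corner_def)
  next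
    assume "(grade a j1 k1 c, grade i1 j2 a d, grade b c k2 m1, grade i2 d b m2) = (0, 2, 0, 0)"
    then have "i2 = 0" "j1 = 0" "k1 = 0" "k2 = 0" "m1 = 0" "m2 = 0" "i1 \<noteq> 0" "j2 \<noteq> 0"
      using two_nonzero(2)[of i1 j2] by (auto simp: grade_eq_0_iff)
    then show ?thesis
      using p q r s by (simp add: corner_def)
  next
    assume "(grade a j1 k1 c, grade i1 j2 a d, grade b c k2 m1, grade i2 d b m2) = (0, 0, 2, 0)"
    then have "i1 = 0" "i2 = 0" "j1 = 0" "j2 = 0" "k1 = 0" "m2 = 0" "k2 \<noteq> 0" "m1 \<noteq> 0"
      using two_nonzero(3)[of k2 m1] by (auto simp: grade_eq_0_iff)
    then show ?thesis
      using p q r s by (simp add: corner_def)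
  next
    assume "(grade a j1 k1 c, grade i1 j2 a d, grade b c k2 m1, grade i2 d b m2) = (0, 0, 0, 2)"
    then have "i1 = 0" "j1 = 0" "j2 = 0" "k1 = 0" "k2 = 0" "m1 = 0" "i2 \<noteq> 0" "m2 \<noteq> 0"
      using two_nonzero(4)[of i2 m2] by (auto simp: grade_eq_0_iff)
    then show ?thesis
      using p q r s by (simp add: corner_def)
  qed
qed

definition grades4 :: "(nat \<times> nat \<times> nat \<times> nat) set" where
  "grades4 = {..2} \<times> {..2} \<times> {..2} \<times> {..2}"

definition expansion_term :: "J_map \<Rightarrow> tensor4 \<Rightarrow> nat \<times> nat \<times> nat \<times> nat \<Rightarrow> tensor4" where
  "expansion_term J A = (\<lambda>(g1, g2, g3, g4).
     typeI4 J (graded_part A g1) (graded_part A g2) (graded_part A g3) (graded_part A g4))"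

definition term_order :: "nat \<times> nat \<times> nat \<times> nat \<Rightarrow> nat" where
  "term_order =
     (\<lambda>(g1, g2, g3, g4). grade_order g1 + grade_order g2 + grade_order g3 + grade_order g4)"

lemma finite_grades4: "finite grades4" and card_grades4: "card grades4 = 81"
  by (simp_all add: grades4_def card_cartesian_product)

lemma typeI_expansion:
  assumes "iso_J J" "hs_fin A"
  shows "typeI J A p q r s = (\<Sum>g\<in>grades4. expansion_term J A g p q r s)"
proof -
  have "A = (\<lambda>i j k l. \<Sum>g\<le>2. graded_part A g i j k l)"
    by (simp add: sum_graded_parts)
  then have "typeI J A p q r s = typeI4 J (\<lambda>i j k l. \<Sum>g\<le>2. graded_part A g i j k l)
      (\<lambda>i j k l. \<Sum>g\<le>2. graded_part A g i j k l) (\<lambda>i j k l. \<Sum>g\<le>2. graded_part A g i j k l)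
      (\<lambda>i j k l. \<Sum>g\<le>2. graded_part A g i j k l) p q r s"
    by (simp add: typeI_eq_typeI4)
  also have "\<dots> = (\<Sum>(g1, g2, g3, g4)\<in>grades4.
      typeI4 J (graded_part A g1) (graded_part A g2) (graded_part A g3) (graded_part A g4) p q r s)"
    unfolding grades4_def
    by (rule typeI4_sum) (auto intro: assms hs_mono(1)[OF assms(2)] simp: graded_part_def)
  finally show ?thesis
    by (simp add: expansion_term_def case_prod_unfold)
qed

lemma expansion_term_hs:
  assumes "iso_J J" "condA2 K \<epsilon> A" "0 \<le> K" "0 \<le> \<epsilon>" "g \<in> grades4"
  shows "hs_fin (expansion_term J A g)"
    and "hs_norm (expansion_term J A g) \<le> (1 + K)^4 * \<epsilon> ^ term_order g"
proof -
  obtain g1 g2 g3 g4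
    where g: "g = (g1, g2, g3, g4)" and le: "g1 \<le> 2" "g2 \<le> 2" "g3 \<le> 2" "g4 \<le> 2"
    using assms(5) by (auto simp: grades4_def)
  note part = graded_part_hs[OF assms(2-4)]
  note typeI4 = typeI4_hs[OF assms(1) part(1)[OF le(1)] part(1)[OF le(2)] part(1)[OF le(3)]
      part(1)[OF le(4)]]
  show "hs_fin (expansion_term J A g)"
    unfolding g expansion_term_def using typeI4(1) by simp
  have "hs_norm (expansion_term J A g) \<le> hs_norm (graded_part A g1) * hs_norm (graded_part A g2)
      * hs_norm (graded_part A g3) * hs_norm (graded_part A g4)"
    unfolding g expansion_term_def using typeI4(2) by simp
  also have "\<dots> \<le> ((1 + K) * \<epsilon> ^ grade_order g1) * ((1 + K) * \<epsilon> ^ grade_order g2)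
      * ((1 + K) * \<epsilon> ^ grade_order g3) * ((1 + K) * \<epsilon> ^ grade_order g4)"
    using part(2)[OF le(1)] part(2)[OF le(2)] part(2)[OF le(3)] part(2)[OF le(4)] assms(3,4)
    by (intro mult_mono) (auto simp: hs_norm_nonneg)
  also have "\<dots> = (1 + K)^4 * \<epsilon> ^ term_order g"
    by (simp add: g term_order_def power_add power4_eq_xxxx ac_simps)
  finally show "hs_norm (expansion_term J A g) \<le> (1 + K)^4 * \<epsilon> ^ term_order g" .
qed

lemma typeI4_Astar:
  assumes "iso_J J"
  shows "typeI4 J Astar Astar Astar Astar = Astar"
proof -
  have "blockT4 Astar Astar Astar Astar = basisvec ((0, 0), (0, 0), (0, 0), (0, 0))"
  proof
    fix e :: block_index
    obtain i1 i2 j1 j2 k1 k2 m1 m2 where e: "e = ((i1, i2), (j1, j2), (k1, k2), (m1, m2))"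
      by (metis prod.exhaust)
    have "((\<lambda>(a, b, c, d). Astar a j1 k1 c * Astar i1 j2 a d * Astar b c k2 m1 * Astar i2 d b m2)
        has_sum basisvec ((0, 0), (0, 0), (0, 0), (0, 0)) e) UNIV"
      by (rule has_sum_finite_neutralI[where B = "{(0, 0, 0, 0)}"])
        (auto simp: e Astar_def basisvec_def split: if_splits)
    then show "blockT4 Astar Astar Astar Astar e = basisvec ((0, 0), (0, 0), (0, 0), (0, 0)) e"
      by (simp add: e blockT4_def infsumI)
  qed
  then have "typeI4 J Astar Astar Astar Astar p q r s
      = column_tensor J (p, q, r, s) ((0, 0), (0, 0), (0, 0), (0, 0))" for p q r s
    by (simp add: typeI4_eq_inner l2_inner_commute[of "column_tensor J _"] l2_inner_basisvec)
  then show ?thesis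
    by (simp add: fun_eq_iff column_tensor_def Jcoef_def iso_J_column_origin[OF assms] Astar_def)
qed

lemma expansion_term_0:
  "iso_J J \<Longrightarrow> A 0 0 0 0 = 1 \<Longrightarrow> expansion_term J A (0, 0, 0, 0) = Astar"
  by (simp add: expansion_term_def graded_part_0 typeI4_Astar)

lemma expansion_term_nonzero:
  assumes J: "iso_J J" and nz: "expansion_term J A (g1, g2, g3, g4) p q r s \<noteq> 0"
  obtains i1 i2 j1 j2 k1 k2 m1 m2 a b c d where
    "p = 0 \<longleftrightarrow> i1 = 0 \<and> i2 = 0" "q = 0 \<longleftrightarrow> j1 = 0 \<and> j2 = 0"
    "r = 0 \<longleftrightarrow> k1 = 0 \<and> k2 = 0" "s = 0 \<longleftrightarrow> m1 = 0 \<and> m2 = 0"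
    "g1 = grade a j1 k1 c" "g2 = grade i1 j2 a d" "g3 = grade b c k2 m1" "g4 = grade i2 d b m2"
proof -
  from nz obtain i1 i2 j1 j2 k1 k2 m1 m2 a b c d where
    "Jcoef J (i1, i2) p \<noteq> 0" "Jcoef J (j1, j2) q \<noteq> 0"
    "Jcoef J (k1, k2) r \<noteq> 0" "Jcoef J (m1, m2) s \<noteq> 0"
    "graded_part A g1 a j1 k1 c \<noteq> 0" "graded_part A g2 i1 j2 a d \<noteq> 0"
    "graded_part A g3 b c k2 m1 \<noteq> 0" "graded_part A g4 i2 d b m2 \<noteq> 0"
    unfolding expansion_term_def by (auto elim: typeI4_nonzero)
  then have "p = 0 \<longleftrightarrow> i1 = 0 \<and> i2 = 0" "q = 0 \<longleftrightarrow> j1 = 0 \<and> j2 = 0"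
    "r = 0 \<longleftrightarrow> k1 = 0 \<and> k2 = 0" "s = 0 \<longleftrightarrow> m1 = 0 \<and> m2 = 0"
    "g1 = grade a j1 k1 c" "g2 = grade i1 j2 a d" "g3 = grade b c k2 m1" "g4 = grade i2 d b m2"
    by (simp_all add: Jcoef_nonzero[OF J] graded_part_nonzero)
  then show ?thesis
    by (rule that)
qed

lemma expansion_term_at_origin:
  assumes "iso_J J" "g \<noteq> (0, 0, 0, 0)" "term_order g < 4"
  shows "expansion_term J A g 0 0 0 0 = 0"
proof (rule ccontr)
  obtain g1 g2 g3 g4 where g: "g = (g1, g2, g3, g4)"
    by (metis prod.exhaust)
  assume "expansion_term J A g 0 0 0 0 \<noteq> 0"
  then obtain a b c d where
    "g1 = grade a 0 0 c" "g2 = grade 0 0 a d" "g3 = grade b c 0 0" "g4 = grade 0 d b 0"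
    unfolding g by (rule expansion_term_nonzero[OF assms(1)]) auto
  with assms(2,3) plaquette_origin_order[of a b c d] show False
    by (cases "a = 0 \<and> b = 0 \<and> c = 0 \<and> d = 0") (auto simp: g term_order_def grade_eq_0_iff)
qed

lemma expansion_term_corner:
  assumes "iso_J J" "term_order g = 1" "expansion_term J A g p q r s \<noteq> 0"
  shows "corner p q r s"
proof -
  obtain g1 g2 g3 g4 where g: "g = (g1, g2, g3, g4)"
    by (metis prod.exhaust)
  from assms(3) obtain i1 i2 j1 j2 k1 k2 m1 m2 a b c d where
    ext: "p = 0 \<longleftrightarrow> i1 = 0 \<and> i2 = 0" "q = 0 \<longleftrightarrow> j1 = 0 \<and> j2 = 0"
      "r = 0 \<longleftrightarrow> k1 = 0 \<and> k2 = 0" "s = 0 \<longleftrightarrow> m1 = 0 \<and> m2 = 0"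
    and grades: "g1 = grade a j1 k1 c" "g2 = grade i1 j2 a d"
      "g3 = grade b c k2 m1" "g4 = grade i2 d b m2"
    unfolding g by (rule expansion_term_nonzero[OF assms(1)])
  have "(g1, g2, g3, g4) \<in> {(2, 0, 0, 0), (0, 2, 0, 0), (0, 0, 2, 0), (0, 0, 0, 2)}"
    using assms(2)
    by (intro grade_order_eq_1_cases) (simp_all add: g term_order_def grades grade_le_2)
  then show ?thesis
    using ext unfolding grades by (rule plaquette_corner)
qed

lemma term_order_eq_0_iff: "term_order g = 0 \<longleftrightarrow> g = (0, 0, 0, 0)"
proof -
  have "grade_order x = 0 \<longleftrightarrow> x = 0" for x
    by (simp add: grade_order_def)
  then show ?thesis
    by (cases g) (simp add: term_order_def)
qed

section \<open>Estimates under condition A2\<close>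

context
  fixes J :: J_map and K \<epsilon> :: real and A :: tensor4
  assumes J: "iso_J J" and A2: "condA2 K \<epsilon> A" and K: "0 < K" and \<epsilon>: "0 < \<epsilon>"
    and small: "(1 + K) * \<epsilon> \<le> 1/4"
begin

lemma eps_le_1: "\<epsilon> \<le> 1"
proof -
  have "\<epsilon> \<le> (1 + K) * \<epsilon>"
    using K \<epsilon> by simp
  then show ?thesis
    using small by linarith
qed

lemma hs_sum_expansion_terms:
  assumes "S \<subseteq> grades4" "\<And>g. g \<in> S \<Longrightarrow> n \<le> term_order g"
  shows "hs_fin (\<lambda>p q r s. \<Sum>g\<in>S. expansion_term J A g p q r s)"
    and "hs_norm (\<lambda>p q r s. \<Sum>g\<in>S. expansion_term J A g p q r s) \<le> 81 * (1 + K)^4 * \<epsilon> ^ n"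
proof -
  have S: "finite S" "card S \<le> 81"
    using finite_subset[OF assms(1) finite_grades4] card_mono[OF finite_grades4 assms(1)]
    by (simp_all add: card_grades4)
  note term_hs = expansion_term_hs[OF J A2 less_imp_le[OF K] less_imp_le[OF \<epsilon>]]
  have hs: "hs_fin (expansion_term J A g)" if "g \<in> S" for g
    using that assms(1) term_hs(1) by blast
  then show "hs_fin (\<lambda>p q r s. \<Sum>g\<in>S. expansion_term J A g p q r s)"
    by (rule hs_sum(1)[OF S(1)])
  have bound: "hs_norm (expansion_term J A g) \<le> (1 + K)^4 * \<epsilon> ^ n" if "g \<in> S" for g
  proof -
    have "hs_norm (expansion_term J A g) \<le> (1 + K)^4 * \<epsilon> ^ term_order g"
      using that assms(1) term_hs(2) by blast
    also have "\<dots> \<le> (1 + K)^4 * \<epsilon> ^ n"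
      using that assms(2) K \<epsilon> eps_le_1 by (intro mult_left_mono power_decreasing) auto
    finally show ?thesis .
  qed
  have "hs_norm (\<lambda>p q r s. \<Sum>g\<in>S. expansion_term J A g p q r s)
      \<le> (\<Sum>g\<in>S. hs_norm (expansion_term J A g))"
    by (rule hs_sum(2)[OF S(1) hs])
  also have "\<dots> \<le> card S * ((1 + K)^4 * \<epsilon> ^ n)"
    using sum_bounded_above[of S "\<lambda>g. hs_norm (expansion_term J A g)"] bound by simp
  also have "\<dots> \<le> 81 * ((1 + K)^4 * \<epsilon> ^ n)"
    using S(2) K \<epsilon> by (intro mult_right_mono) auto
  finally show
    "hs_norm (\<lambda>p q r s. \<Sum>g\<in>S. expansion_term J A g p q r s) \<le> 81 * (1 + K)^4 * \<epsilon> ^ n"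
    by simp
qed

lemma typeI_origin_bound: "\<bar>typeI J A 0 0 0 0 - 1\<bar> \<le> 81 * (1 + K)^4 * \<epsilon>^4"
proof -
  have A: "hs_fin A" "A 0 0 0 0 = 1"
    using A2 by (simp_all add: condA2_def condA1_def)
  define S where "S = {g \<in> grades4. 4 \<le> term_order g}"
  have zero: "(0, 0, 0, 0) \<in> grades4"
    by (simp add: grades4_def)
  have "typeI J A 0 0 0 0 = expansion_term J A (0, 0, 0, 0) 0 0 0 0
      + (\<Sum>g\<in>grades4 - {(0, 0, 0, 0)}. expansion_term J A g 0 0 0 0)"
    unfolding typeI_expansion[OF J A(1)] by (rule sum.remove[OF finite_grades4 zero])
  also have "(\<Sum>g\<in>grades4 - {(0, 0, 0, 0)}. expansion_term J A g 0 0 0 0)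
      = (\<Sum>g\<in>S. expansion_term J A g 0 0 0 0)"
  proof (rule sum.mono_neutral_right)
    show "S \<subseteq> grades4 - {(0, 0, 0, 0)}"
      using term_order_eq_0_iff[of "(0, 0, 0, 0)"] by (auto simp: S_def)
    show "\<forall>g\<in>grades4 - {(0, 0, 0, 0)} - S. expansion_term J A g 0 0 0 0 = 0"
    proof
      fix g
      assume "g \<in> grades4 - {(0, 0, 0, 0)} - S"
      then show "expansion_term J A g 0 0 0 0 = 0"
        by (intro expansion_term_at_origin[OF J]) (auto simp: S_def)
    qed
  qed (simp add: finite_grades4)
  finally have diff: "typeI J A 0 0 0 0 - 1 = (\<Sum>g\<in>S. expansion_term J A g 0 0 0 0)"
    by (simp add: expansion_term_0[of J A, OF J A(2)] Astar_def)
  have S: "S \<subseteq> grades4" "\<And>g. g \<in> S \<Longrightarrow> 4 \<le> term_order g"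
    by (auto simp: S_def)
  have "\<bar>\<Sum>g\<in>S. expansion_term J A g 0 0 0 0\<bar>
      \<le> hs_norm (\<lambda>p q r s. \<Sum>g\<in>S. expansion_term J A g p q r s)"
    by (rule abs_le_hs_norm[OF hs_sum_expansion_terms(1)[OF S]])
  also have "\<dots> \<le> 81 * (1 + K)^4 * \<epsilon>^4"
    by (rule hs_sum_expansion_terms(2)[OF S])
  finally show ?thesis
    unfolding diff .
qed

lemma typeI_origin_ge: "1/2 \<le> typeI J A 0 0 0 0"
proof -
  have "(1 + K)^4 * \<epsilon>^4 = ((1 + K) * \<epsilon>)^4"
    by (simp add: power_mult_distrib)
  also have "\<dots> \<le> (1/4)^4"
    using small K \<epsilon> by (intro power_mono) auto
  finally have "(1 + K)^4 * \<epsilon>^4 \<le> 1 / 256"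
    by (simp add: power_divide)
  then show ?thesis
    using typeI_origin_bound unfolding abs_le_iff by linarith
qed

lemma typeI_decomposition:
  "typeI J A p q r s = Astar p q r s
     + (\<Sum>g\<in>{g \<in> grades4. term_order g = 1}. expansion_term J A g p q r s)
     + (\<Sum>g\<in>{g \<in> grades4. 2 \<le> term_order g}. expansion_term J A g p q r s)"
proof -
  have A: "hs_fin A" "A 0 0 0 0 = 1"
    using A2 by (simp_all add: condA2_def condA1_def)
  let ?O0 = "{g \<in> grades4. term_order g = 0}"
  let ?O1 = "{g \<in> grades4. term_order g = 1}"
  let ?O2 = "{g \<in> grades4. 2 \<le> term_order g}"
  have split: "grades4 = ?O0 \<union> ?O1 \<union> ?O2"
    by auto
  have O0: "?O0 = {(0, 0, 0, 0)}"
    by (auto simp: term_order_eq_0_iff grades4_def)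
  have "typeI J A p q r s = (\<Sum>g\<in>?O0 \<union> ?O1 \<union> ?O2. expansion_term J A g p q r s)"
    using typeI_expansion[OF J A(1)] split by simp
  also have "\<dots> = (\<Sum>g\<in>?O0. expansion_term J A g p q r s)
      + (\<Sum>g\<in>?O1. expansion_term J A g p q r s) + (\<Sum>g\<in>?O2. expansion_term J A g p q r s)"
    using finite_grades4 by (subst sum.union_disjoint; auto)+
  finally show ?thesis
    by (simp add: O0 expansion_term_0[of J A, OF J A(2)])
qed

lemma typeI_normalized_condA3:
  "condA3 (324 * (1 + K)^4) \<epsilon> (\<lambda>p q r s. typeI J A p q r s / typeI J A 0 0 0 0)"
proof -
  let ?O1 = "{g \<in> grades4. term_order g = 1}" and ?O2 = "{g \<in> grades4. 2 \<le> term_order g}"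
  have "?O1 \<subseteq> grades4" "\<And>g. g \<in> ?O1 \<Longrightarrow> 1 \<le> term_order g"
    by auto
  note P = hs_sum_expansion_terms[OF this]
  have "?O2 \<subseteq> grades4" "\<And>g. g \<in> ?O2 \<Longrightarrow> 2 \<le> term_order g"
    by auto
  note R = hs_sum_expansion_terms[OF this]
  have "81 * (1 + K)^4 * \<epsilon>^4 \<le> 81 * (1 + K)^4 * \<epsilon>^2"
    using K \<epsilon> eps_le_1 by (intro mult_left_mono power_decreasing) auto
  then have "\<bar>typeI J A 0 0 0 0 - 1\<bar> \<le> 81 * (1 + K)^4 * \<epsilon>^2"
    using typeI_origin_bound by linarith
  moreover have "(\<Sum>g\<in>?O1. expansion_term J A g p q r s) = 0" if "\<not> corner p q r s" for p q r s
  proof (rule sum.neutral, rule ballI)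
    fix g
    assume "g \<in> ?O1"
    then show "expansion_term J A g p q r s = 0"
      using expansion_term_corner[OF J, of g A p q r s] that by auto
  qed
  ultimately have
    "condA3 (4 * (81 * (1 + K)^4)) \<epsilon> (\<lambda>p q r s. typeI J A p q r s / typeI J A 0 0 0 0)"
    using P R typeI_origin_ge by (intro condA3_of_decomposition[OF typeI_decomposition]) simp_all
  then show ?thesis
    by simp
qed

end

theorem proposition2:
  fixes K :: real
  assumes "K > 0"
  shows "\<exists>K' \<epsilon>0. K' > 0 \<and> \<epsilon>0 > 0 \<and>
    (\<forall>J. iso_J J \<longrightarrow>
      (\<forall>\<epsilon> A. 0 < \<epsilon> \<and> \<epsilon> \<le> \<epsilon>0 \<and> condA2 K \<epsilon> A \<longrightarrow>
         \<bar>typeI J A 0 0 0 0 - 1\<bar> \<le> K' * \<epsilon>^4 \<and>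
         condA3 K' \<epsilon> (\<lambda>p q r s. typeI J A p q r s / typeI J A 0 0 0 0)))"
proof (intro exI conjI allI impI)
  show "0 < 324 * (1 + K)^4" and "0 < 1 / (4 * (1 + K))"
    using assms by simp_all
  fix J \<epsilon> A
  assume J: "iso_J J" and "0 < \<epsilon> \<and> \<epsilon> \<le> 1 / (4 * (1 + K)) \<and> condA2 K \<epsilon> A"
  then have \<epsilon>: "0 < \<epsilon>" "\<epsilon> \<le> 1 / (4 * (1 + K))" and A2: "condA2 K \<epsilon> A"
    by simp_all
  have small: "(1 + K) * \<epsilon> \<le> 1/4"
    using \<epsilon>(2) assms by (simp add: field_simps)
  have "81 * (1 + K)^4 * \<epsilon>^4 \<le> 324 * (1 + K)^4 * \<epsilon>^4"
    using assms by simp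
  then show "\<bar>typeI J A 0 0 0 0 - 1\<bar> \<le> 324 * (1 + K)^4 * \<epsilon>^4"
    using typeI_origin_bound[OF J A2 assms \<epsilon>(1) small] by linarith
  show "condA3 (324 * (1 + K)^4) \<epsilon> (\<lambda>p q r s. typeI J A p q r s / typeI J A 0 0 0 0)"
    by (rule typeI_normalized_condA3[OF J A2 assms \<epsilon>(1) small])
qed

end
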